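(* For every base $\mathscr{B}$, finite multisets of atoms $S,T$, and IMLL formula $\chi$: if $\Vdash^{S}_{\mathscr{B}}\mathrm{I}$ and $\Vdash^{T}_{\mathscr{B}}\chi$, then $\Vdash^{S,T}_{\mathscr{B}}\chi$.
   Context: Fix a countably infinite set $\mathbb{A}$ of atoms. IMLL formulas: $\varphi::= p\in\mathbb{A}\mid\varphi\otimes\varphi\mid \mathrm{I}\mid\varphi\multimap\varphi$. Collections are finite multisets; "$,$" denotes multiset union. An atomic rule is $(P_1\triangleright p_1,\dots,P_n\triangleright p_n)\Rightarrow p$ ($n\ge0$, $P_i$ finite multisets of atoms); a base is a set of atomic rules. Derivability $\vdash_{\mathscr{B}}$ is the least relation with (Ref) $[p]\vdash_{\mathscr{B}}p$; (App) if $(P_1\triangleright p_1,\dots,P_n\triangleright p_n)\Rightarrow p\in\mathscr{B}$ and $S_i,P_i\vdash_{\mathscr{B}}p_i$ for all $i$, then $S_1,\dots,S_n\vdash_{\mathscr{B}}p$. Support: (At) $\Vdash^{P}_{\mathscr{B}}p$ iff $P\vdash_{\mathscr{B}}p$; ($\otimes$) $\Vdash^{P}_{\mathscr{B}}\varphi\otimes\psi$ iff for every $\mathscr{X}\supseteq\mathscr{B}$, multiset of atoms $U$, atom $p$, if $\varphi,\psi\Vdash^{U}_{\mathscr{X}}p$ then $\Vdash^{P,U}_{\mathscr{X}}p$; ($\mathrm{I}$) $\Vdash^{P}_{\mathscr{B}}\mathrm{I}$ iff for every $\mathscr{X}\supseteq\mathscr{B}$, $U$, $p$, if $\Vdash^{U}_{\mathscr{X}}p$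 then $\Vdash^{P,U}_{\mathscr{X}}p$; ($\multimap$) $\Vdash^{P}_{\mathscr{B}}\varphi\multimap\psi$ iff $\varphi\Vdash^{P}_{\mathscr{B}}\psi$; (comma) for nonempty $\Gamma,\Delta$, $\Vdash^{P}_{\mathscr{B}}\Gamma,\Delta$ iff $P=U,V$ for some $U,V$ with $\Vdash^{U}_{\mathscr{B}}\Gamma$, $\Vdash^{V}_{\mathscr{B}}\Delta$ (singleton $[\varphi]$ supported iff $\varphi$ is); (Inf) for nonempty $\Gamma$, $\Gamma\Vdash^{P}_{\mathscr{B}}\varphi$ iff for every $\mathscr{X}\supseteq\mathscr{B}$ and $U$, if $\Vdash^{U}_{\mathscr{X}}\Gamma$ then $\Vdash^{P,U}_{\mathscr{X}}\varphi$. *)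

theory Defs
  imports "HOL-Library.Multiset"
begin

type_synonym atom = nat

datatype formula =
    Atom atom
  | Tensor formula formula
  | One
  | Lolli formula formula

text \<open>An atomic rule (P1 |> p1, ..., Pn |> pn) => p is represented as the
  pair (premises list, conclusion atom).\<close>
type_synonym rule = "(atom multiset \<times> atom) list \<times> atom"
type_synonym base = "rule set"

inductive derivable :: "base \<Rightarrow> atom multiset \<Rightarrow> atom \<Rightarrow> bool" for B where
  Ref: "derivable B {#p#} p"
| App: "\<lbrakk> (prems, p) \<in> B; length Ss = length prems;
          \<forall>i < length prems. derivable B (Ss ! i + fst (prems ! i)) (snd (prems ! i)) \<rbrakk>
        \<Longrightarrow> derivable B (sum_list Ss) p"

text \<open>Support. The multiset-of-formulas clauses (comma and Inf) are
  inlined in the tensor and implication clauses.\<close>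
primrec supp :: "base \<Rightarrow> atom multiset \<Rightarrow> formula \<Rightarrow> bool" where
  "supp B P (Atom p) = derivable B P p"
| "supp B P (Tensor \<phi> \<psi>) =
     (\<forall>X U p. B \<subseteq> X \<longrightarrow>
        (\<forall>Y V. X \<subseteq> Y \<longrightarrow>
             (\<exists>V1 V2. V = V1 + V2 \<and> supp Y V1 \<phi> \<and> supp Y V2 \<psi>) \<longrightarrow>
             derivable Y (U + V) p)
        \<longrightarrow> derivable X (P + U) p)"
| "supp B P One =
     (\<forall>X U p. B \<subseteq> X \<longrightarrow> derivable X U p \<longrightarrow> derivable X (P + U) p)"
| "supp B P (Lolli \<phi> \<psi>) =
     (\<forall>X U. B \<subseteq> X \<longrightarrow> supp X U \<phi> \<longrightarrow> supp X (P + U) \<psi>)"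

end

theory Submission
  imports Defs
begin

text \<open>Support of \<open>I\<close> by \<open>S\<close> says exactly that \<open>S\<close> may be
  added to the context of any derivation over any extension of the base; this
  settles atoms directly, and the \<open>\<otimes>\<close> and \<open>I\<close> clauses, whose conclusions are
  derivations over extensions, after moving \<open>S\<close> through the hypothesis. For
  \<open>\<multimap>\<close> the induction hypothesis is applied over an extended base, which is why
  support of \<open>I\<close> must persist under base extension.\<close>

lemma supp_One_mono: "supp B S One \<Longrightarrow> B \<subseteq> X \<Longrightarrow> supp X S One"
  by auto

theorem lemma1:
  fixes B :: base and S T :: "atom multiset" and \<chi> :: formula
  assumes "supp B S One" and "supp B T \<chi>"
  shows "supp B (S + T) \<chi>"
  using assms
proof (induction \<chi> arbitrary: B T)
  case (Atom p)
  then show ?case by auto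
next
  case (Tensor \<phi> \<psi>)
  show ?case
  proof (simp only: supp.simps, intro allI impI)
    fix X U p
    assume BX: "B \<subseteq> X"
      and elim: "\<forall>Y V. X \<subseteq> Y \<longrightarrow> (\<exists>V1 V2. V = V1 + V2 \<and> supp Y V1 \<phi> \<and> supp Y V2 \<psi>)
                   \<longrightarrow> derivable Y (U + V) p"
    have "\<forall>Y V. X \<subseteq> Y \<longrightarrow> (\<exists>V1 V2. V = V1 + V2 \<and> supp Y V1 \<phi> \<and> supp Y V2 \<psi>)
            \<longrightarrow> derivable Y ((S + U) + V) p"
    proof (intro allI impI)
      fix Y V
      assume XY: "X \<subseteq> Y" and "\<exists>V1 V2. V = V1 + V2 \<and> supp Y V1 \<phi> \<and> supp Y V2 \<psi>"
      with elim have "derivable Y (U + V) p" by blast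
      with Tensor.prems(1) BX XY have "derivable Y (S + (U + V)) p" by auto
      then show "derivable Y ((S + U) + V) p" by (simp add: add.assoc)
    qed
    with Tensor.prems(2) BX have "derivable X (T + (S + U)) p" by simp
    then show "derivable X (S + T + U) p" by (simp add: ac_simps)
  qed
next
  case One
  show ?case
  proof (simp only: supp.simps, intro allI impI)
    fix X U p
    assume BX: "B \<subseteq> X" and "derivable X U p"
    with One.prems(2) have "derivable X (T + U) p" by simp
    with One.prems(1) BX have "derivable X (S + (T + U)) p" by simp
    then show "derivable X (S + T + U) p" by (simp add: add.assoc)
  qed
next
  case (Lolli \<phi> \<psi>)
  show ?case
  proof (simp only: supp.simps, intro allI impI)
    fix X U
    assume BX: "B \<subseteq> X" and "supp X U \<phi>"
    with Lolli.prems(2) have "supp X (T + U) \<psi>" by simp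
    moreover have "supp X S One" using supp_One_mono[OF Lolli.prems(1) BX] .
    ultimately have "supp X (S + (T + U)) \<psi>" using Lolli.IH(2) by blast
    then show "supp X (S + T + U) \<psi>" by (simp add: add.assoc)
  qed
qed

end
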